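(* Let $q,N\in\mathbb{N}$ with $q,N\ge1$ and $p\in(0,1)$. Choose $L\in\mathbb{N}$ and $\varepsilon>0$ with $$L\ge\frac{2nD(q+A+C+2)^n}{(1-p)C^n}\quad\text{and}\quad\varepsilon\le\frac1{2NL}.$$ If $s$ is chosen uniformly at random from $S=\frac1{NL}\{0,\dots,L-1\}^n$, then $\Pr\big(G(s)\cap H_{\mathrm{grid}}(\varepsilon)=\emptyset\big)\ge p$, where $G(s)=\{s+\frac1Nv:v\in\{0,\dots,qN-1\}^n\}$.
   Context: An $n$-dimensional infrastructure consists of a full-rank lattice $\Lambda\subset\mathbb{R}^n$, a finite non-empty set $X$, an injective map $d:X\to\mathbb{R}^n/\Lambda$, and a set $\mathrm{fRep}\subseteq X\times\mathbb{R}^n$ with $X\times\{0\}\subseteq\mathrm{fRep}$ such that $\Phi:\mathrm{fRep}\to\mathbb{R}^n/\Lambda$, $(x,t)\mapsto d(x)+t$, is a bijection. Let $\pi:\mathbb{R}^n\to\mathbb{R}^n/\Lambda$ be the projection, $\hat X=\pi^{-1}(d(X))$, and for $\hat x\in\hat X$ let $\hat V_{\hat x}=\{\hat x+t:(d^{-1}(\pi(\hat x)),t)\in\mathrm{fRep}\}$; these sets partition $\mathbb{R}^n$. Standing assumptions: the infrastructure is cornered (for each $\hat x$, $\hat x\in\hat V_{\hat x}$ and $\{r:\hat x\le r\le t\}\subseteq\hat V_{\hat x}$ for all $t\in\hat V_{\hat x}$, componentwise order); (A1) there is $A>0$ with $\hat V_{\hat x}\subseteq\hat x+[0,A]^n$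 for all $\hat x$; (A2) there are $C,D>0$ such that $(r+[0,C]^n)\cap\hat X$ has at most $D$ elements for every $r\in\mathbb{R}^n$. $\mathbb{N}=\{0,1,2,\dots\}$, and $$H_{\mathrm{grid}}(\varepsilon)=\bigcup_{\hat x\in\hat X}\Big(\big(\tfrac1N\mathbb{N}^n+\partial\hat V_{\hat x}\big)\cap\overline{\hat V_{\hat x}}\Big)+[-\varepsilon,\varepsilon]^n,$$ with $\partial$ the topological boundary and $\overline{\,\cdot\,}$ the closure. *)

theory Defs
  imports "HOL-Analysis.Analysis"
begin

text \<open>Dimension n is the cardinality of the finite index type 'n; vectors are real^'n,
  ordered componentwise (the library order on real^'n).\<close>

definition lattice_of :: "real^'n^'n \<Rightarrow> (real^'n) set" where
  "lattice_of B = {B *v (\<chi> i. real_of_int (k $ i)) | k :: int^'n. True}"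

definition full_rank_lattice :: "(real^'n::finite) set \<Rightarrow> bool" where
  "full_rank_lattice \<Lambda> \<longleftrightarrow> (\<exists>B. invertible B \<and> \<Lambda> = lattice_of B)"

text \<open>The map d : X -> R^n/\<Lambda> is represented by a choice of representatives d x \<in> R^n;
  pi(a) = pi(b) iff a - b \<in> \<Lambda>.\<close>
definition infrastructure ::
  "(real^'n::finite) set \<Rightarrow> 'x set \<Rightarrow> ('x \<Rightarrow> real^'n) \<Rightarrow> ('x \<times> (real^'n)) set \<Rightarrow> bool" where
  "infrastructure \<Lambda> X d fRep \<longleftrightarrow>
     full_rank_lattice \<Lambda> \<and> finite X \<and> X \<noteq> {} \<and>
     (\<forall>x\<in>X. \<forall>y\<in>X. d x - d y \<in> \<Lambda> \<longrightarrow> x = y) \<and>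
     fRep \<subseteq> X \<times> UNIV \<and> X \<times> {0} \<subseteq> fRep \<and>
     (\<forall>x t x' t'. (x, t) \<in> fRep \<longrightarrow> (x', t') \<in> fRep \<longrightarrow>
         (d x + t) - (d x' + t') \<in> \<Lambda> \<longrightarrow> (x, t) = (x', t')) \<and>
     (\<forall>r. \<exists>(x, t) \<in> fRep. (d x + t) - r \<in> \<Lambda>)"

definition Xhat :: "(real^'n::finite) set \<Rightarrow> 'x set \<Rightarrow> ('x \<Rightarrow> real^'n) \<Rightarrow> (real^'n) set" where
  "Xhat \<Lambda> X d = {y. \<exists>x\<in>X. y - d x \<in> \<Lambda>}"

definition Vhat ::
  "(real^'n::finite) set \<Rightarrow> 'x set \<Rightarrow> ('x \<Rightarrow> real^'n) \<Rightarrow> ('x \<times> (real^'n)) set \<Rightarrow> real^'n \<Rightarrow> (real^'n) set" where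
  "Vhat \<Lambda> X d fRep xh = {xh + t | t. \<exists>x\<in>X. xh - d x \<in> \<Lambda> \<and> (x, t) \<in> fRep}"

definition cornered ::
  "(real^'n::finite) set \<Rightarrow> 'x set \<Rightarrow> ('x \<Rightarrow> real^'n) \<Rightarrow> ('x \<times> (real^'n)) set \<Rightarrow> bool" where
  "cornered \<Lambda> X d fRep \<longleftrightarrow>
     (\<forall>xh \<in> Xhat \<Lambda> X d. xh \<in> Vhat \<Lambda> X d fRep xh \<and>
        (\<forall>t \<in> Vhat \<Lambda> X d fRep xh. {r. xh \<le> r \<and> r \<le> t} \<subseteq> Vhat \<Lambda> X d fRep xh))"

definition grid :: "nat \<Rightarrow> (real^'n::finite) set" where
  "grid N = {(1 / real N) *\<^sub>R (\<chi> i. real (k $ i)) | k :: nat^'n. True}"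

definition cube :: "real \<Rightarrow> (real^'n::finite) set" where
  "cube e = {v. \<forall>i. \<bar>v $ i\<bar> \<le> e}"

definition H_grid ::
  "(real^'n::finite) set \<Rightarrow> 'x set \<Rightarrow> ('x \<Rightarrow> real^'n) \<Rightarrow> ('x \<times> (real^'n)) set \<Rightarrow> nat \<Rightarrow> real \<Rightarrow> (real^'n) set" where
  "H_grid \<Lambda> X d fRep N e =
     {h + w | h w. h \<in> (\<Union>xh \<in> Xhat \<Lambda> X d.
         {a + b | a b. a \<in> grid N \<and> b \<in> frontier (Vhat \<Lambda> X d fRep xh)}
           \<inter> closure (Vhat \<Lambda> X d fRep xh)) \<and> w \<in> cube e}"

definition sample_set :: "nat \<Rightarrow> nat \<Rightarrow> (real^'n::finite) set" where
  "sample_set N L = {(1 / (real N * real L)) *\<^sub>R (\<chi> i. real (k $ i)) | k :: nat^'n. \<forall>i. k $ i < L}"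

definition G_set :: "nat \<Rightarrow> nat \<Rightarrow> real^'n::finite \<Rightarrow> (real^'n) set" where
  "G_set q N s = {s + (1 / real N) *\<^sub>R (\<chi> i. real (v $ i)) | v :: nat^'n. \<forall>i. v $ i < q * N}"

end

theory Submission
  imports Defs
begin

text \<open>A sample s is bad when some point of G(s) lies within \<epsilon> of a point h = a + b with
  a \<in> (1/N) N^n and b on the boundary of a cell V(x). Such an h lies in the box [y, y + A] of some
  y \<in> Xhat and satisfies h_j - y_j \<in> (1/N) N for some coordinate j: either b lies on a lower face
  of V(x), and then h_j - x_j = a_j, or the points just above h belong to another cell V(y), and
  since the cells are disjoint and cornered, the corner y must share a coordinate with h.
  Hence s_j is within \<epsilon> of y_j + (1/N) Z for one of n coordinates j and one of at most
  D ceil((q + A + 2\<epsilon>)/C)^n corners y, by (A2). For fixed y and j, \<epsilon> \<le> 1/(2NL) leaves only two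
  residues modulo L for the j-th index of s, i.e. 2 L^(n-1) samples, and the choice of L makes
  the total at most (1 - p) L^n = (1 - p) |S|.\<close>

section \<open>Counting points in boxes\<close>

lemma translated_box_eq_cbox:
  fixes r :: "real^'n::finite"
  shows "{r + t | t. \<forall>i. 0 \<le> t $ i \<and> t $ i \<le> W} = cbox r (r + (\<chi> i. W))"
proof (intro set_eqI iffI)
  fix x assume "x \<in> cbox r (r + (\<chi> i. W))"
  then have "x = r + (x - r) \<and> (\<forall>i. 0 \<le> (x - r) $ i \<and> (x - r) $ i \<le> W)"
    by (simp add: mem_box_cart diff_le_eq add.commute)
  then show "x \<in> {r + t | t. \<forall>i. 0 \<le> t $ i \<and> t $ i \<le> W}" by blast
qed (auto simp: mem_box_cart diff_le_eq add.commute)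

lemma vec_box_eq_image_PiE:
  "{k :: 'a^'n::finite. \<forall>i. k $ i \<in> B i} = vec_lambda ` PiE UNIV B"
proof (intro set_eqI iffI)
  fix k :: "'a^'n" assume "k \<in> {k. \<forall>i. k $ i \<in> B i}"
  then have "vec_nth k \<in> PiE UNIV B" by auto
  then show "k \<in> vec_lambda ` PiE UNIV B" by (metis image_eqI vec_nth_inverse)
qed auto

lemma
  fixes B :: "'n::finite \<Rightarrow> 'a set"
  assumes "\<And>i. finite (B i)"
  shows finite_vec_box: "finite {k :: 'a^'n. \<forall>i. k $ i \<in> B i}"
    and card_vec_box: "card {k :: 'a^'n. \<forall>i. k $ i \<in> B i} = (\<Prod>i\<in>UNIV. card (B i))"
proof -
  have "inj_on vec_lambda (PiE UNIV B :: ('n \<Rightarrow> 'a) set)"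
    by (rule inj_onI) (metis vec_lambda_inverse UNIV_I)
  then show "card {k :: 'a^'n. \<forall>i. k $ i \<in> B i} = (\<Prod>i\<in>UNIV. card (B i))"
    by (simp add: vec_box_eq_image_PiE card_image card_PiE)
  show "finite {k :: 'a^'n. \<forall>i. k $ i \<in> B i}"
    using assms by (simp add: vec_box_eq_image_PiE finite_PiE)
qed

lemma
  shows finite_vec_less: "finite {k :: nat^'n::finite. \<forall>i. k $ i < M}"
    and card_vec_less: "card {k :: nat^'n::finite. \<forall>i. k $ i < M} = M ^ CARD('n)"
  using finite_vec_box[of "\<lambda>_. {..<M}"] card_vec_box[of "\<lambda>_. {..<M}"] by simp_all

lemma card_vec_box_one_coordinate:
  fixes T :: "'a set" and L :: "'a set" and j :: "'n::finite"
  assumes "finite T" "finite L"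
  shows "card {k :: 'a^'n. \<forall>i. k $ i \<in> (if i = j then T else L)} = card T * card L ^ (CARD('n) - 1)"
proof -
  have "(\<Prod>i\<in>UNIV. card (if i = j then T else L)) = card T * (\<Prod>i\<in>UNIV - {j}. card L)"
    by (subst prod.remove[where x = j]) auto
  then show ?thesis
    using assms by (subst card_vec_box) (simp_all add: card_Diff_singleton)
qed

lemma interval_step_index:
  fixes C W t :: real
  assumes "C > 0" "W > 0" "0 \<le> t" "t \<le> W"
  obtains k :: nat where "k < nat \<lceil>W / C\<rceil>" "C * real k \<le> t" "t \<le> C * real k + C"
proof
  define k where "k = nat (\<lceil>t / C\<rceil> - 1)"
  have "\<lceil>t / C\<rceil> \<le> \<lceil>W / C\<rceil>" "0 < \<lceil>W / C\<rceil>"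
    using assms by (simp_all add: ceiling_mono divide_right_mono)
  then show "k < nat \<lceil>W / C\<rceil>" unfolding k_def by linarith
  have "real k \<le> t / C"
    using ceiling_correct[of "t / C"] assms unfolding k_def by (cases "t = 0") (auto simp: of_nat_nat)
  then show "C * real k \<le> t" using assms by (simp add: field_simps)
  have "t / C \<le> real k + 1" using le_of_int_ceiling[of "t / C"] unfolding k_def by linarith
  then show "t \<le> C * real k + C" using assms by (simp add: field_simps)
qed

lemma
  fixes P :: "(real^'n::finite) set" and C D W :: real
  assumes C: "C > 0" and W: "W > 0"
    and finite_local: "\<And>r. finite (cbox r (r + (\<chi> i. C)) \<inter> P)"
    and card_local: "\<And>r. real (card (cbox r (r + (\<chi> i. C)) \<inter> P)) \<le> D"
  shows finite_cbox_Int: "finite (cbox r (r + (\<chi> i. W)) \<inter> P)"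
    and card_cbox_Int_le: "real (card (cbox r (r + (\<chi> i. W)) \<inter> P)) \<le> D * real (nat \<lceil>W / C\<rceil>) ^ CARD('n)"
proof -
  define M where "M = nat \<lceil>W / C\<rceil>"
  define K where "K = {k :: nat^'n. \<forall>i. k $ i < M}"
  define corner where "corner k = r + C *\<^sub>R (\<chi> i. real (k $ i))" for k :: "nat^'n"
  define U where "U = (\<Union>k\<in>K. cbox (corner k) (corner k + (\<chi> i. C)) \<inter> P)"
  have "cbox r (r + (\<chi> i. W)) \<subseteq> (\<Union>k\<in>K. cbox (corner k) (corner k + (\<chi> i. C)))"
  proof
    fix z assume "z \<in> cbox r (r + (\<chi> i. W))"
    then have zr: "r $ i \<le> z $ i" "z $ i \<le> r $ i + W" for i by (simp_all add: mem_box_cart)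
    have "0 \<le> (z - r) $ i \<and> (z - r) $ i \<le> W" for i using zr[of i] by simp
    then have "\<exists>k. k < M \<and> C * real k \<le> (z - r) $ i \<and> (z - r) $ i \<le> C * real k + C" for i
      using interval_step_index[OF C W, of "(z - r) $ i"] unfolding M_def by blast
    then obtain k where k: "\<And>i. k i < M \<and> C * real (k i) \<le> (z - r) $ i \<and> (z - r) $ i \<le> C * real (k i) + C"
      by metis
    have "vec_lambda k \<in> K" using k by (simp add: K_def)
    moreover have "z \<in> cbox (corner (vec_lambda k)) (corner (vec_lambda k) + (\<chi> i. C))"
      unfolding mem_box_cart corner_def using k by (simp add: algebra_simps)
    ultimately show "z \<in> (\<Union>k\<in>K. cbox (corner k) (corner k + (\<chi> i. C)))" by blast
  qed
  then have sub: "cbox r (r + (\<chi> i. W)) \<inter> P \<subseteq> U" unfolding U_def by blast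
  have finK: "finite K" and cardK: "card K = M ^ CARD('n)"
    unfolding K_def by (simp_all add: finite_vec_less card_vec_less)
  have finU: "finite U" unfolding U_def using finK finite_local by blast
  then show "finite (cbox r (r + (\<chi> i. W)) \<inter> P)" using sub by (rule finite_subset[rotated])
  have "card (cbox r (r + (\<chi> i. W)) \<inter> P) \<le> card U" by (rule card_mono[OF finU sub])
  also have "\<dots> \<le> (\<Sum>k\<in>K. card (cbox (corner k) (corner k + (\<chi> i. C)) \<inter> P))"
    unfolding U_def by (rule card_UN_le[OF finK])
  finally have "real (card (cbox r (r + (\<chi> i. W)) \<inter> P))
      \<le> (\<Sum>k\<in>K. real (card (cbox (corner k) (corner k + (\<chi> i. C)) \<inter> P)))"
    unfolding of_nat_sum[symmetric] of_nat_le_iff .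
  also have "\<dots> \<le> (\<Sum>k\<in>K. D)" by (intro sum_mono card_local)
  finally show "real (card (cbox r (r + (\<chi> i. W)) \<inter> P)) \<le> D * real M ^ CARD('n)"
    using cardK by (simp add: mult.commute)
qed

section \<open>Sample sets\<close>

lemma index_in_nearest_residues:
  fixes k L N :: nat and c e :: real and m :: int
  assumes "k < L" "N \<ge> 1" "e \<le> 1 / (2 * real N * real L)"
    and "\<bar>real k / (real N * real L) - c - real_of_int m / real N\<bar> \<le> e"
  shows "k \<in> {nat (\<lceil>c * N * L - 1/2\<rceil> mod L), nat ((\<lceil>c * N * L - 1/2\<rceil> + 1) mod L)}"
proof -
  \<comment> \<open>\<open>k - m L\<close> is an integer within \<open>1/2\<close> of \<open>c N L\<close>, and \<open>k\<close> is its residue modulo \<open>L\<close>\<close>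
  define u where "u = int k + (- m) * int L"
  have "real N > 0" "real L > 0" using assms(1,2) by simp_all
  then have NL: "real N * real L > 0" by simp
  have "real_of_int u - c * N * L
      = (real k / (real N * real L) - c - real_of_int m / real N) * (real N * real L)"
    using \<open>real N > 0\<close> \<open>real L > 0\<close> by (simp add: u_def field_simps)
  also have "\<bar>\<dots>\<bar> \<le> e * (real N * real L)"
    using assms(4) NL by (simp add: abs_mult mult_right_mono)
  also have "\<dots> \<le> 1/2" using assms(3) NL by (simp add: field_simps)
  finally have "\<bar>real_of_int u - c * N * L\<bar> \<le> 1/2" .
  then have "u = \<lceil>c * N * L - 1/2\<rceil> \<or> u = \<lceil>c * N * L - 1/2\<rceil> + 1"
    using ceiling_correct[of "c * N * L - 1/2"] le_of_int_ceiling[of "c * N * L - 1/2"]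
    by linarith
  moreover have "int k = u mod int L"
    unfolding u_def mod_mult_self1 using assms(1) by simp
  ultimately show ?thesis by auto
qed

lemma sample_set_eq_image:
  "sample_set N L = (\<lambda>k. (1 / (real N * real L)) *\<^sub>R (\<chi> i. real (k $ i))) ` {k :: nat^'n::finite. \<forall>i. k $ i < L}"
  unfolding sample_set_def by auto

lemma
  assumes "N \<ge> 1"
  shows finite_sample_set: "finite (sample_set N L :: (real^'n::finite) set)"
    and card_sample_set: "card (sample_set N L :: (real^'n) set) = L ^ CARD('n)"
proof -
  let ?f = "\<lambda>k :: nat^'n. (1 / (real N * real L)) *\<^sub>R (\<chi> i. real (k $ i))"
  have "inj_on ?f {k. \<forall>i. k $ i < L}"
    using assms by (intro inj_onI) (auto simp: vec_eq_iff)
  then show "card (sample_set N L :: (real^'n) set) = L ^ CARD('n)"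
    by (simp add: sample_set_eq_image card_image card_vec_less)
  show "finite (sample_set N L :: (real^'n) set)"
    by (simp add: sample_set_eq_image finite_vec_less)
qed

lemma card_samples_near_shifted_grid_le:
  fixes c :: real and j :: "'n::finite"
  assumes "N \<ge> 1" "e \<le> 1 / (2 * real N * real L)"
  shows "card {s \<in> sample_set N L :: (real^'n) set. \<exists>m::int. \<bar>s $ j - c - real_of_int m / real N\<bar> \<le> e}
    \<le> 2 * L ^ (CARD('n) - 1)"
proof -
  define u0 where "u0 = \<lceil>c * N * L - 1/2\<rceil>"
  define T where "T = {nat (u0 mod L), nat ((u0 + 1) mod L)}"
  let ?f = "\<lambda>k :: nat^'n. (1 / (real N * real L)) *\<^sub>R (\<chi> i. real (k $ i))"
  have "{s \<in> sample_set N L. \<exists>m::int. \<bar>s $ j - c - real_of_int m / real N\<bar> \<le> e}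
      \<subseteq> ?f ` {k. \<forall>i. k $ i \<in> (if i = j then T else {..<L})}"
  proof
    fix s assume "s \<in> {s \<in> sample_set N L. \<exists>m::int. \<bar>s $ j - c - real_of_int m / real N\<bar> \<le> e}"
    then obtain k m where k: "\<forall>i. k $ i < L" "s = ?f k"
      and near: "\<bar>s $ j - c - real_of_int m / real N\<bar> \<le> e"
      unfolding sample_set_def by blast
    have "k $ j \<in> T"
      unfolding T_def u0_def using index_in_nearest_residues[OF _ assms] k near by simp
    then show "s \<in> ?f ` {k. \<forall>i. k $ i \<in> (if i = j then T else {..<L})}" using k by auto
  qed
  then have "card {s \<in> sample_set N L. \<exists>m::int. \<bar>s $ j - c - real_of_int m / real N\<bar> \<le> e}
      \<le> card (?f ` {k :: nat^'n. \<forall>i. k $ i \<in> (if i = j then T else {..<L})})"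
    by (rule card_mono[rotated]) (simp add: T_def finite_vec_box)
  also have "\<dots> \<le> card {k :: nat^'n. \<forall>i. k $ i \<in> (if i = j then T else {..<L})}"
    by (rule card_image_le) (simp add: T_def finite_vec_box)
  also have "\<dots> = card T * L ^ (CARD('n) - 1)"
    unfolding T_def by (subst card_vec_box_one_coordinate) simp_all
  also have "\<dots> \<le> 2 * L ^ (CARD('n) - 1)"
    unfolding T_def by (simp add: card_insert_le_m1)
  finally show ?thesis .
qed

lemma sample_set_coordinate_bounds:
  assumes "N \<ge> 1" "s \<in> sample_set N L"
  shows "0 \<le> s $ i" "s $ i < 1 / real N"
proof -
  obtain k where k: "s = (1 / (real N * real L)) *\<^sub>R (\<chi> i. real (k $ i))" "\<forall>i. k $ i < L"
    using assms(2) unfolding sample_set_def by blast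
  have "real N > 0" "real (k $ i) < real L" using assms(1) k(2) by simp_all
  then show "0 \<le> s $ i" "s $ i < 1 / real N" using k(1) by (simp_all add: field_simps)
qed

lemma G_set_coordinate_bounds:
  assumes "N \<ge> 1" "s \<in> sample_set N L" "g \<in> G_set q N s"
  shows "0 \<le> g $ i" "g $ i < real q"
proof -
  obtain v where v: "g = s + (1 / real N) *\<^sub>R (\<chi> i. real (v $ i))" "\<forall>i. v $ i < q * N"
    using assms(3) unfolding G_set_def by blast
  have "real (v $ i) + 1 \<le> real q * real N"
    using v(2) by (metis Suc_leI of_nat_Suc of_nat_le_iff of_nat_mult add.commute)
  then have "real (v $ i) / real N + 1 / real N \<le> real q"
    using assms(1) by (simp add: field_simps)
  then show "0 \<le> g $ i" "g $ i < real q"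
    using sample_set_coordinate_bounds[OF assms(1,2), of i] v(1) by simp_all
qed

lemma card_Diff_div_card_ge:
  assumes "finite S" "B \<subseteq> S" "S \<noteq> {}" "real (card B) \<le> (1 - p) * real (card S)"
  shows "p \<le> real (card (S - B)) / real (card S)"
proof -
  have "real (card (S - B)) = real (card S) - real (card B)"
    using assms(1,2) by (simp add: card_Diff_subset card_mono finite_subset of_nat_diff)
  moreover have "real (card S) > 0" using assms(1,3) by (simp add: card_gt_0_iff)
  ultimately show ?thesis using assms(4) by (simp add: pos_le_divide_eq algebra_simps)
qed

section \<open>Cells of a cornered infrastructure\<close>

lemma lattice_of_diff:
  assumes "x \<in> lattice_of B" "y \<in> lattice_of B"
  shows "x - y \<in> lattice_of B"
proof -
  obtain k k' where "x = B *v (\<chi> i. real_of_int (k $ i))" "y = B *v (\<chi> i. real_of_int (k' $ i))"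
    using assms unfolding lattice_of_def by blast
  moreover have "(\<chi> i. real_of_int (k $ i)) - (\<chi> i. real_of_int (k' $ i))
      = (\<chi> i. real_of_int ((k - k') $ i))"
    by (simp add: vec_eq_iff)
  ultimately have "x - y = B *v (\<chi> i. real_of_int ((k - k') $ i))"
    by (metis matrix_vector_mult_diff_distrib)
  then show ?thesis unfolding lattice_of_def by blast
qed

lemma lattice_of_uminus:
  assumes "x \<in> lattice_of B"
  shows "- x \<in> lattice_of B"
proof -
  have "(x - x) - x \<in> lattice_of B" using assms by (intro lattice_of_diff)
  then show ?thesis by simp
qed

lemma eventually_shift_le_imp_le:
  fixes y h :: "real^'n::finite"
  shows "eventually (\<lambda>\<delta>. y \<le> h + (\<chi> i. \<delta>) \<longrightarrow> y \<le> h) (at_right 0)"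
proof (cases "y \<le> h")
  case False
  then obtain k where k: "h $ k < y $ k" by (auto simp: less_eq_vec_def not_le)
  have "eventually (\<lambda>\<delta>. \<delta> < y $ k - h $ k) (at_right 0)"
    using k by (auto simp: eventually_at_right_field intro!: exI[of _ "y $ k - h $ k"])
  then show ?thesis
  proof eventually_elim
    case (elim \<delta>)
    show ?case
    proof
      assume "y \<le> h + (\<chi> i. \<delta>)"
      then have "y $ k \<le> h $ k + \<delta>" by (simp add: less_eq_vec_def)
      then show "y \<le> h" using elim by linarith
    qed
  qed
qed simp

locale bounded_cornered_infrastructure =
  fixes \<Lambda> :: "(real^'n::finite) set" and X :: "'x set" and d :: "'x \<Rightarrow> real^'n"
    and fRep :: "('x \<times> (real^'n)) set" and A C D :: real
  assumes infra: "infrastructure \<Lambda> X d fRep"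
    and corner: "cornered \<Lambda> X d fRep"
    and A_pos: "A > 0"
    and Vhat_bounded: "\<forall>xh \<in> Xhat \<Lambda> X d. Vhat \<Lambda> X d fRep xh \<subseteq> {xh + t | t. \<forall>i. 0 \<le> t $ i \<and> t $ i \<le> A}"
    and C_pos: "C > 0" and D_pos: "D > 0"
    and Xhat_sparse: "\<forall>r::real^'n. finite ({r + t | t. \<forall>i. 0 \<le> t $ i \<and> t $ i \<le> C} \<inter> Xhat \<Lambda> X d) \<and>
          real (card ({r + t | t. \<forall>i. 0 \<le> t $ i \<and> t $ i \<le> C} \<inter> Xhat \<Lambda> X d)) \<le> D"
begin

abbreviation "XH \<equiv> Xhat \<Lambda> X d"
abbreviation "V \<equiv> Vhat \<Lambda> X d fRep"

lemma
  shows full_rank: "full_rank_lattice \<Lambda>"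
    and fRep_subset: "fRep \<subseteq> X \<times> UNIV"
    and fRep_unique_mod_lattice: "\<And>x t x' t'. (x, t) \<in> fRep \<Longrightarrow> (x', t') \<in> fRep \<Longrightarrow>
         (d x + t) - (d x' + t') \<in> \<Lambda> \<Longrightarrow> (x, t) = (x', t')"
    and fRep_covers_mod_lattice: "\<And>r. \<exists>(x, t) \<in> fRep. (d x + t) - r \<in> \<Lambda>"
  using infra unfolding infrastructure_def by (simp_all only:)

lemma lattice_diff: "x \<in> \<Lambda> \<Longrightarrow> y \<in> \<Lambda> \<Longrightarrow> x - y \<in> \<Lambda>"
  and lattice_uminus: "x \<in> \<Lambda> \<Longrightarrow> - x \<in> \<Lambda>"
proof -
  obtain B where "\<Lambda> = lattice_of B" using full_rank unfolding full_rank_lattice_def by blast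
  then show "x \<in> \<Lambda> \<Longrightarrow> y \<in> \<Lambda> \<Longrightarrow> x - y \<in> \<Lambda>" "x \<in> \<Lambda> \<Longrightarrow> - x \<in> \<Lambda>"
    by (simp_all add: lattice_of_diff lattice_of_uminus)
qed

lemma Vhat_imp_Xhat: "r \<in> V y \<Longrightarrow> y \<in> XH"
  unfolding Vhat_def Xhat_def by blast

lemma Vhat_cover: obtains y where "r \<in> V y"
proof -
  obtain x t where xt: "(x, t) \<in> fRep" "(d x + t) - r \<in> \<Lambda>"
    using fRep_covers_mod_lattice[of r] by blast
  then have "x \<in> X" using fRep_subset by blast
  have eq: "(r - t) - d x = - ((d x + t) - r)" by (simp add: algebra_simps)
  have "(r - t) - d x \<in> \<Lambda>" unfolding eq by (rule lattice_uminus[OF xt(2)])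
  then have "r \<in> V (r - t)" unfolding Vhat_def using xt(1) \<open>x \<in> X\<close> by (auto intro!: exI[of _ t])
  then show thesis by (rule that)
qed

lemma Vhat_unique:
  assumes "r \<in> V y" "r \<in> V y'"
  shows "y = y'"
proof -
  obtain t x where 1: "r = y + t" "y - d x \<in> \<Lambda>" "(x, t) \<in> fRep"
    using assms(1) unfolding Vhat_def by blast
  obtain t' x' where 2: "r = y' + t'" "y' - d x' \<in> \<Lambda>" "(x', t') \<in> fRep"
    using assms(2) unfolding Vhat_def by blast
  have eq: "(d x + t) - (d x' + t') = (y' - d x') - (y - d x)" using 1(1) 2(1)
    by (simp add: algebra_simps)
  have "(d x + t) - (d x' + t') \<in> \<Lambda>" unfolding eq by (rule lattice_diff[OF 2(2) 1(2)])
  then have "t = t'" using fRep_unique_mod_lattice 1(3) 2(3) by blast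
  then show ?thesis using 1(1) 2(1) by simp
qed

lemma Vhat_down_closed: "t \<in> V y \<Longrightarrow> y \<le> r \<Longrightarrow> r \<le> t \<Longrightarrow> r \<in> V y"
  using corner Vhat_imp_Xhat unfolding cornered_def by blast

lemma Vhat_subset_cbox: "V y \<subseteq> cbox y (y + (\<chi> i. A))"
proof
  fix z assume z: "z \<in> V y"
  then have "z \<in> {y + t | t. \<forall>i. 0 \<le> t $ i \<and> t $ i \<le> A}"
    using Vhat_bounded Vhat_imp_Xhat by blast
  then show "z \<in> cbox y (y + (\<chi> i. A))" by (simp add: translated_box_eq_cbox)
qed

lemma closure_Vhat_subset_cbox: "closure (V y) \<subseteq> cbox y (y + (\<chi> i. A))"
  by (rule closure_minimal[OF Vhat_subset_cbox closed_cbox])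

lemma
  assumes "W > 0"
  shows finite_Xhat_cbox: "finite (cbox r (r + (\<chi> i. W)) \<inter> XH)"
    and card_Xhat_cbox_le: "real (card (cbox r (r + (\<chi> i. W)) \<inter> XH)) \<le> D * real (nat \<lceil>W / C\<rceil>) ^ CARD('n)"
proof -
  have "\<And>r. finite (cbox r (r + (\<chi> i. C)) \<inter> XH)"
    and "\<And>r. real (card (cbox r (r + (\<chi> i. C)) \<inter> XH)) \<le> D"
    using Xhat_sparse by (simp_all add: translated_box_eq_cbox)
  from finite_cbox_Int[OF C_pos assms this] card_cbox_Int_le[OF C_pos assms this]
  show "finite (cbox r (r + (\<chi> i. W)) \<inter> XH)"
    and "real (card (cbox r (r + (\<chi> i. W)) \<inter> XH)) \<le> D * real (nat \<lceil>W / C\<rceil>) ^ CARD('n)" .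
qed

lemma box_subset_Vhat:
  assumes "t \<in> V x"
  shows "box x t \<subseteq> V x"
proof
  fix r assume "r \<in> box x t"
  then have "x \<le> r" "r \<le> t" by (simp_all add: mem_box_cart less_eq_vec_def less_imp_le)
  then show "r \<in> V x" by (rule Vhat_down_closed[OF assms])
qed

lemma frontier_Vhat_lower_face:
  assumes b: "b \<in> frontier (V x)" and t: "t \<in> V x" "\<forall>i. b $ i < t $ i"
  obtains j where "b $ j = x $ j"
proof -
  have "b \<in> cbox x (x + (\<chi> i. A))"
    using b closure_Vhat_subset_cbox unfolding frontier_def by blast
  then have "x $ i \<le> b $ i" for i by (simp add: mem_box_cart)
  moreover have "b \<notin> box x t"
  proof
    assume "b \<in> box x t"
    then have "b \<in> interior (V x)" by (meson interiorI open_box box_subset_Vhat[OF t(1)])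
    then show False using b by (simp add: frontier_def)
  qed
  ultimately have "\<exists>j. b $ j = x $ j"
    using t(2) by (metis mem_box_cart(1) order.not_eq_order_implies_strict)
  then show thesis using that by blast
qed

lemma Vhat_eq_if_between:
  assumes "h \<in> closure (V x)" "p \<in> V y" "\<forall>i. y $ i < h $ i \<and> h $ i < p $ i"
  shows "y = x"
proof -
  have "h \<in> box y p" using assms(3) by (simp add: mem_box_cart)
  then have "box y p \<inter> V x \<noteq> {}"
    using assms(1) open_Int_closure_eq_empty[OF open_box] by blast
  then obtain z where z: "z \<in> V x" "z \<in> box y p" by blast
  have "z \<in> V y" using box_subset_Vhat[OF assms(2)] z(2) by (rule subsetD)
  then show ?thesis using Vhat_unique[OF z(1)] by simp
qed

lemma small_shift_keeps_Xhat_below: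
  fixes h :: "real^'n"
  obtains \<delta> :: real where "0 < \<delta>" "\<delta> \<le> 1"
    "\<And>y. y \<in> XH \<Longrightarrow> h + (\<chi> i. \<delta>) \<in> cbox y (y + (\<chi> i. A)) \<Longrightarrow> y \<le> h"
proof -
  \<comment> \<open>\<open>F\<close> holds every corner whose box can contain \<open>h + \<delta>\<close> with \<open>\<delta> \<le> 1\<close>; it is finite by (A2)\<close>
  define F where "F = cbox (h - (\<chi> i. A)) (h - (\<chi> i. A) + (\<chi> i. A + 1)) \<inter> XH"
  have "finite F" unfolding F_def using A_pos by (intro finite_Xhat_cbox) simp
  moreover note eventually_shift_le_imp_le[of _ h]
  ultimately have "eventually (\<lambda>\<delta>. \<forall>y\<in>F. y \<le> h + (\<chi> i. \<delta>) \<longrightarrow> y \<le> h) (at_right 0)"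
    by (simp add: eventually_ball_finite)
  moreover have "eventually (\<lambda>\<delta>::real. 0 < \<delta> \<and> \<delta> \<le> 1) (at_right 0)"
    by (auto simp: eventually_at_right_field intro: exI[of _ 1])
  ultimately have "eventually (\<lambda>\<delta>. 0 < \<delta> \<and> \<delta> \<le> 1 \<and> (\<forall>y\<in>F. y \<le> h + (\<chi> i. \<delta>) \<longrightarrow> y \<le> h)) (at_right 0)"
    by eventually_elim blast
  then obtain \<delta> where \<delta>: "0 < \<delta>" "\<delta> \<le> 1" "\<forall>y\<in>F. y \<le> h + (\<chi> i. \<delta>) \<longrightarrow> y \<le> h"
    using eventually_happens'[OF trivial_limit_at_right_real] by blast
  show thesis
  proof (rule that[OF \<delta>(1,2)])
    fix y assume y: "y \<in> XH" "h + (\<chi> i. \<delta>) \<in> cbox y (y + (\<chi> i. A))"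
    then have "y \<le> h + (\<chi> i. \<delta>)" by (simp add: mem_box_cart less_eq_vec_def)
    moreover have "y \<in> F"
    proof -
      have "y $ i \<le> h $ i + \<delta>" "h $ i + \<delta> \<le> y $ i + A" for i
        using y(2) by (simp_all add: mem_box_cart)
      then have "h $ i - A \<le> y $ i \<and> y $ i \<le> h $ i - A + (A + 1)" for i
        using \<delta>(1,2) by (smt (verit))
      then have "y \<in> cbox (h - (\<chi> i. A)) (h - (\<chi> i. A) + (\<chi> i. A + 1))"
        by (simp add: mem_box_cart)
      then show ?thesis using y(1) by (simp add: F_def)
    qed
    ultimately show "y \<le> h" using \<delta>(3) by blast
  qed
qed

lemma grid_frontier_point_on_Xhat_hyperplane:
  assumes h: "h \<in> closure (V x)" "h = a + b" "a \<in> grid N" "b \<in> frontier (V x)"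
  obtains y j and m :: nat
  where "y \<in> XH" "h \<in> cbox y (y + (\<chi> i. A))" "h $ j - y $ j = real m / real N"
proof -
  obtain ka :: "nat^'n" where ka: "a = (1 / real N) *\<^sub>R (\<chi> i. real (ka $ i))"
    using h(3) unfolding grid_def by blast
  obtain \<delta> where \<delta>: "0 < \<delta>" "\<delta> \<le> 1"
    and below: "\<And>y. y \<in> XH \<Longrightarrow> h + (\<chi> i. \<delta>) \<in> cbox y (y + (\<chi> i. A)) \<Longrightarrow> y \<le> h"
    using small_shift_keeps_Xhat_below[of h] by blast
  define p where "p = h + (\<chi> i. \<delta>)"
  have hp: "h $ i < p $ i" for i using \<delta>(1) by (simp add: p_def)
  obtain y where py: "p \<in> V y" by (rule Vhat_cover)
  have y: "y \<in> XH" using Vhat_imp_Xhat[OF py] .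
  have p_box: "p \<in> cbox y (y + (\<chi> i. A))" using Vhat_subset_cbox py by blast
  then have yh: "y \<le> h" using below y unfolding p_def by blast
  have "p $ i \<le> y $ i + A" for i using p_box by (simp add: mem_box_cart)
  then have "h $ i \<le> y $ i + A" for i using hp[of i] by (meson less_imp_le order_trans)
  then have h_box: "h \<in> cbox y (y + (\<chi> i. A))" using yh by (simp add: mem_box_cart less_eq_vec_def)
  \<comment> \<open>either \<open>b\<close> lies on a lower face of \<open>V x\<close>, or the cell reached just above \<open>h\<close> is a
    different one, whose corner must then share a coordinate with \<open>h\<close>\<close>
  show thesis
  proof (cases "y = x")
    case True
    have "b $ i \<le> h $ i" for i unfolding h(2) ka by simp
    then have "b $ i < p $ i" for i using hp[of i] by (rule le_less_trans)
    then obtain j where "b $ j = x $ j"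
      using frontier_Vhat_lower_face[OF h(4)] py True by blast
    then have "h $ j - y $ j = real (ka $ j) / real N" using True h(2) ka by simp
    then show thesis using that y h_box by blast
  next
    case False
    then have "\<not> (\<forall>i. y $ i < h $ i \<and> h $ i < p $ i)" using Vhat_eq_if_between[OF h(1) py] by blast
    then obtain j where "y $ j = h $ j" using yh hp by (metis less_eq_vec_def order.not_eq_order_implies_strict)
    then have "h $ j - y $ j = real 0 / real N" by simp
    then show thesis using that y h_box by blast
  qed
qed

section \<open>Bad samples\<close>

lemma bad_sample_near_Xhat:
  assumes N: "N \<ge> 1" and s: "s \<in> sample_set N L"
    and g: "g \<in> G_set q N s" "g \<in> H_grid \<Lambda> X d fRep N e"
  obtains y j and m :: int where "y \<in> cbox (\<chi> i. - (e + A)) (\<chi> i. real q + e) \<inter> XH"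
    "\<bar>s $ j - y $ j - real_of_int m / real N\<bar> \<le> e"
proof -
  obtain v where v: "g = s + (1 / real N) *\<^sub>R (\<chi> i. real (v $ i))"
    using g(1) unfolding G_set_def by blast
  obtain h w x a b where hw: "g = h + w" "w \<in> cube e"
    and h: "h \<in> closure (V x)" "h = a + b" "a \<in> grid N" "b \<in> frontier (V x)"
    using g(2) unfolding H_grid_def by blast
  obtain y j m0 where y: "y \<in> XH" "h \<in> cbox y (y + (\<chi> i. A))" "h $ j - y $ j = real m0 / real N"
    by (rule grid_frontier_point_on_Xhat_hyperplane[OF h])
  have w: "\<bar>w $ i\<bar> \<le> e" for i using hw(2) unfolding cube_def by blast
  have hy: "y $ i \<le> h $ i" "h $ i \<le> y $ i + A" "h $ i = g $ i - w $ i" for i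
    using y(2) hw(1) by (simp_all add: mem_box_cart)
  have "- (e + A) \<le> y $ i \<and> y $ i \<le> real q + e" for i
    using hy[of i] G_set_coordinate_bounds[OF N s g(1), of i] w[of i] by linarith
  then have "y \<in> cbox (\<chi> i. - (e + A)) (\<chi> i. real q + e) \<inter> XH"
    using y(1) by (simp add: mem_box_cart)
  moreover have "s $ j - y $ j - real_of_int (int m0 - int (v $ j)) / real N = w $ j"
  proof -
    have "g $ j = s $ j + real (v $ j) / real N" using v by simp
    moreover have "g $ j = h $ j + w $ j" using hw(1) by simp
    ultimately
    show ?thesis using y(3) by (simp add: diff_divide_distrib)
  qed
  ultimately show thesis using that[of y j "int m0 - int (v $ j)"] w[of j] by simp
qed

lemma bad_samples_subset_near_Xhat:
  assumes "N \<ge> 1"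
  shows "{s \<in> sample_set N L. G_set q N s \<inter> H_grid \<Lambda> X d fRep N e \<noteq> {}}
    \<subseteq> (\<Union>y \<in> cbox (\<chi> i. - (e + A)) (\<chi> i. real q + e) \<inter> XH. \<Union>j.
          {s \<in> sample_set N L. \<exists>m::int. \<bar>s $ j - y $ j - real_of_int m / real N\<bar> \<le> e})"
proof
  fix s assume "s \<in> {s \<in> sample_set N L. G_set q N s \<inter> H_grid \<Lambda> X d fRep N e \<noteq> {}}"
  then obtain g where s: "s \<in> sample_set N L" and g: "g \<in> G_set q N s" "g \<in> H_grid \<Lambda> X d fRep N e"
    by blast
  obtain y j m where "y \<in> cbox (\<chi> i. - (e + A)) (\<chi> i. real q + e) \<inter> XH"
    "\<bar>s $ j - y $ j - real_of_int m / real N\<bar> \<le> e"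
    by (rule bad_sample_near_Xhat[OF assms s g])
  then show "s \<in> (\<Union>y \<in> cbox (\<chi> i. - (e + A)) (\<chi> i. real q + e) \<inter> XH. \<Union>j.
          {s \<in> sample_set N L. \<exists>m::int. \<bar>s $ j - y $ j - real_of_int m / real N\<bar> \<le> e})"
    using s by blast
qed

lemma card_Xhat_sample_box_le:
  assumes "q \<ge> 1" "0 < e" "e \<le> 1 / 2"
  shows finite_Xhat_sample_box: "finite (cbox (\<chi> i. - (e + A)) (\<chi> i. real q + e) \<inter> XH)"
    and "real (card (cbox (\<chi> i. - (e + A)) (\<chi> i. real q + e) \<inter> XH))
      \<le> D * ((real q + A + C + 2) / C) ^ CARD('n)"
proof -
  define W where "W = real q + A + 2 * e"
  have box: "(\<chi> i. real q + e) = (\<chi> i. - (e + A)) + (\<chi> i. W)" by (simp add: W_def vec_eq_iff)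
  have "W > 0" using assms A_pos by (simp add: W_def)
  then show "finite (cbox (\<chi> i. - (e + A)) (\<chi> i. real q + e) \<inter> XH)"
    unfolding box by (rule finite_Xhat_cbox)
  have "real (nat \<lceil>W / C\<rceil>) \<le> W / C + 1"
    using \<open>W > 0\<close> C_pos by (simp add: of_nat_nat)
  also have "\<dots> \<le> (real q + A + C + 2) / C"
    using assms(3) C_pos by (simp add: W_def field_simps)
  finally show "real (card (cbox (\<chi> i. - (e + A)) (\<chi> i. real q + e) \<inter> XH))
      \<le> D * ((real q + A + C + 2) / C) ^ CARD('n)"
    unfolding box using card_Xhat_cbox_le[OF \<open>W > 0\<close>] D_pos
    by (meson mult_left_mono of_nat_0_le_iff order_trans power_mono less_imp_le)
qed

lemma card_bad_samples_le:
  assumes q: "q \<ge> 1" and N: "N \<ge> 1" and e: "e > 0" "e \<le> 1 / (2 * real N * real L)"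
  shows "real (card {s \<in> sample_set N L. G_set q N s \<inter> H_grid \<Lambda> X d fRep N e \<noteq> {}})
    \<le> 2 * real CARD('n) * D * ((real q + A + C + 2) / C) ^ CARD('n) * real L ^ (CARD('n) - 1)"
proof -
  define n where "n = CARD('n)"
  define Y where "Y = cbox (\<chi> i. - (e + A)) (\<chi> i. real q + e) \<inter> XH"
  define near where "near y j =
    {s \<in> sample_set N L. \<exists>m::int. \<bar>s $ j - y $ j - real_of_int m / real N\<bar> \<le> e}"
    for y :: "real^'n" and j
  have fin_near: "finite (near y j)" for y j
    unfolding near_def using finite_sample_set[OF N] by (rule finite_subset[rotated]) blast
  have "L \<noteq> 0" using e by (cases "L = 0") auto
  then have "1 \<le> real N" "1 \<le> real L" using N by simp_all
  then have "1 \<le> real N * real L" using mult_mono[of 1 "real N" 1 "real L"] by simp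
  then have "1 / (2 * real N * real L) \<le> 1 / 2" by (simp add: field_simps)
  then have "e \<le> 1 / 2" using e(2) by linarith
  then have finY: "finite Y" and card_Y: "real (card Y) \<le> D * ((real q + A + C + 2) / C) ^ n"
    using card_Xhat_sample_box_le[OF q e(1)] by (simp_all add: Y_def n_def)
  have "card {s \<in> sample_set N L. G_set q N s \<inter> H_grid \<Lambda> X d fRep N e \<noteq> {}}
      \<le> card (\<Union>y\<in>Y. \<Union>j. near y j)"
    using bad_samples_subset_near_Xhat[OF N] finY fin_near
    by (intro card_mono) (simp_all add: Y_def near_def)
  also have "\<dots> \<le> (\<Sum>y\<in>Y. \<Sum>j\<in>UNIV. card (near y j))"
    using finY by (intro order_trans[OF card_UN_le] sum_mono card_UN_le) simp_all
  also have "\<dots> \<le> (\<Sum>y\<in>Y. \<Sum>j\<in>(UNIV :: 'n set). 2 * L ^ (n - 1))"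
    unfolding near_def n_def using card_samples_near_shifted_grid_le[OF N e(2)]
    by (intro sum_mono) blast
  also have "\<dots> = card Y * (2 * n * L ^ (n - 1))" by (simp add: n_def)
  finally have "real (card {s \<in> sample_set N L. G_set q N s \<inter> H_grid \<Lambda> X d fRep N e \<noteq> {}})
      \<le> real (card Y * (2 * n * L ^ (n - 1)))"
    by (simp only: of_nat_le_iff)
  also have "\<dots> = real (card Y) * (2 * real n * real L ^ (n - 1))" by simp
  also have "\<dots> \<le> D * ((real q + A + C + 2) / C) ^ n * (2 * real n * real L ^ (n - 1))"
    using card_Y by (rule mult_right_mono) simp
  finally show ?thesis by (simp add: n_def mult_ac)
qed

end

theorem proposition4p2:
  fixes \<Lambda> :: "(real^'n::finite) set" and X :: "'x set" and d :: "'x \<Rightarrow> real^'n"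
    and fRep :: "('x \<times> (real^'n)) set"
    and A C D :: real and q N L :: nat and p e :: real
  assumes infra: "infrastructure \<Lambda> X d fRep"
    and corner: "cornered \<Lambda> X d fRep"
    and A1: "A > 0" "\<forall>xh \<in> Xhat \<Lambda> X d. Vhat \<Lambda> X d fRep xh \<subseteq> {xh + t | t. \<forall>i. 0 \<le> t $ i \<and> t $ i \<le> A}"
    and A2: "C > 0" "D > 0"
      "\<forall>r::real^'n. finite ({r + t | t. \<forall>i. 0 \<le> t $ i \<and> t $ i \<le> C} \<inter> Xhat \<Lambda> X d) \<and>
          real (card ({r + t | t. \<forall>i. 0 \<le> t $ i \<and> t $ i \<le> C} \<inter> Xhat \<Lambda> X d)) \<le> D"
    and q: "q \<ge> 1" and N: "N \<ge> 1" and p: "0 < p" "p < 1"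
    and L: "real L \<ge> 2 * real CARD('n) * D * (real q + A + C + 2) ^ CARD('n) / ((1 - p) * C ^ CARD('n))"
    and e: "e > 0" "e \<le> 1 / (2 * real N * real L)"
  shows "real (card {s \<in> sample_set N L. G_set q N s \<inter> H_grid \<Lambda> X d fRep N e = {}})
           / real (card (sample_set N L :: (real^'n) set)) \<ge> p"
proof -
  interpret bounded_cornered_infrastructure \<Lambda> X d fRep A C D
    using infra corner A1 A2 by unfold_locales
  define n where "n = CARD('n)"
  define S where "S = (sample_set N L :: (real^'n) set)"
  define Bad where "Bad = {s \<in> S. G_set q N s \<inter> H_grid \<Lambda> X d fRep N e \<noteq> {}}"
  have "L \<noteq> 0" using e by (cases "L = 0") auto
  have card_S: "card S = L ^ n" using card_sample_set[OF N] by (simp add: S_def n_def)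
  then have "S \<noteq> {}" using \<open>L \<noteq> 0\<close> by auto
  have "2 * real n * D * ((real q + A + C + 2) / C) ^ n
      = (1 - p) * (2 * real n * D * (real q + A + C + 2) ^ n / ((1 - p) * C ^ n))"
    using p by (simp add: power_divide)
  also have "\<dots> \<le> (1 - p) * real L" using L p by (intro mult_left_mono) (simp_all add: n_def)
  finally have "real (card Bad) \<le> (1 - p) * real L * real L ^ (n - 1)"
    using card_bad_samples_le[OF q N e] unfolding Bad_def S_def n_def
    by (meson mult_right_mono order_trans zero_le_power of_nat_0_le_iff)
  also have "\<dots> = (1 - p) * real (card S)"
    using zero_less_card_finite[where 'a = 'n] unfolding card_S n_def
    by (cases "CARD('n)") simp_all
  finally have "p \<le> real (card (S - Bad)) / real (card S)"
    using finite_sample_set[OF N] \<open>S \<noteq> {}\<close>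
    by (intro card_Diff_div_card_ge) (auto simp: S_def Bad_def)
  moreover have "{s \<in> S. G_set q N s \<inter> H_grid \<Lambda> X d fRep N e = {}} = S - Bad"
    unfolding Bad_def by blast
  ultimately show ?thesis by (simp add: S_def)
qed

end
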